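(* Let $F(\mathbf{w})=\mathbb{E}_{\mathbf{x}\sim\mathcal{X}}[f(\mathbf{w},\mathbf{x})]$ satisfy (PL) with constant $\alpha>0$, (Smooth) with constant $\beta>0$, and (Bounded variance) with constant $V\ge0$; let $F^*=\min_{\mathbf{w}}F(\mathbf{w})$. Let $S$ be a positive integer and $\eta\in(0,2(S\beta)^{-1})$; define $\gamma=\eta\alpha(2-\eta\beta)$, $\Delta=\frac{1}{2\gamma}\eta^2\beta V$, and $\xi(S)=\frac{2-\eta\beta}{2-S\eta\beta}$. Run scaled SGD at scale $S$ with constant learning rate $\mathrm{lr}(t)=S\eta$ for $T$ iterations from $\mathbf{w}_0$. Then \[ \mathbb{E}[F(\mathbf{w}_T)-F^*]\le\Big(1-\frac{\gamma}{\xi(S)}\Big)^{ST}[F(\mathbf{w}_0)-F^*]+\xi(S)\,\Delta. \]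
   Context: Setting: $\mathcal{X}$ is a distribution over batches; $f(\cdot,\mathbf{x})$ and $F$ are differentiable with $\mathbb{E}_{\mathbf{x}\sim\mathcal{X}}[\nabla_{\mathbf{w}}f(\mathbf{w},\mathbf{x})]=\nabla F(\mathbf{w})$. $\sigma_{\mathbf{g}}^2(\mathbf{w})=\mathrm{tr}\big(\mathrm{cov}_{\mathbf{x}\sim\mathcal{X}}(\nabla_{\mathbf{w}}f(\mathbf{w},\mathbf{x}),\nabla_{\mathbf{w}}f(\mathbf{w},\mathbf{x}))\big)$. (PL): $F(\mathbf{w})-F^*\le\frac1{2\alpha}\|\nabla F(\mathbf{w})\|^2$ for all $\mathbf{w}$. (Smooth): $\|\nabla F(\mathbf{w})-\nabla F(\mathbf{w}')\|\le\beta\|\mathbf{w}-\mathbf{w}'\|$. (Bounded variance): $\sigma_{\mathbf{g}}^2(\mathbf{w})\le V$ for all $\mathbf{w}$. Scaled SGD with scale $S$, schedule $\mathrm{lr}$, $T$ iterations: for $t=0,\dots,T-1$, draw $S$ batches $\mathbf{x}^{(1)},\dots,\mathbf{x}^{(S)}\sim\mathcal{X}$ independently of each other and of the past, set $\bar{\mathbf{g}}_t=\frac1S\sum_{i=1}^S\nabla_{\mathbf{w}}f(\mathbf{w}_t,\mathbf{x}^{(i)})$ and $\mathbf{w}_{t+1}=\mathbf{w}_t-\mathrm{lr}(t)\bar{\mathbf{g}}_t$; output $\mathbf{w}_T$. *)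

theory Defs
  imports "HOL-Probability.Probability"
begin

text \<open>Trace of the covariance of the stochastic gradient at w, written out:
  tr cov(g,g) = E ||g - E g||^2 (as an extended nonnegative real, so that an
  infinite second moment gives infinity).\<close>
definition sigma_g2 :: "'b measure \<Rightarrow> ('a::euclidean_space \<Rightarrow> 'b \<Rightarrow> 'a) \<Rightarrow> 'a \<Rightarrow> ennreal" where
  "sigma_g2 X gf w = (\<integral>\<^sup>+ x. ennreal ((norm (gf w x - (\<integral> y. gf w y \<partial>X)))\<^sup>2) \<partial>X)"

text \<open>Scaled SGD iterate.  The sample omega (t,i) is the i-th batch drawn at iteration t.\<close>
primrec scaled_sgd ::
  "('a::real_vector \<Rightarrow> 'b \<Rightarrow> 'a) \<Rightarrow> nat \<Rightarrow> (nat \<Rightarrow> real) \<Rightarrow> 'a \<Rightarrow> (nat \<times> nat \<Rightarrow> 'b) \<Rightarrow> nat \<Rightarrow> 'a" where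
  "scaled_sgd gf S lr w0 \<omega> 0 = w0"
| "scaled_sgd gf S lr w0 \<omega> (Suc t) =
     (let w = scaled_sgd gf S lr w0 \<omega> t
      in w - lr t *\<^sub>R ((1 / real S) *\<^sub>R (\<Sum>i<S. gf w (\<omega> (t, i)))))"

definition batches :: "nat \<Rightarrow> nat \<Rightarrow> 'b measure \<Rightarrow> (nat \<times> nat \<Rightarrow> 'b) measure" where
  "batches T S X = PiM ({..<T} \<times> {..<S}) (\<lambda>_. X)"

end

theory Submission
  imports Defs
begin

text \<open>For a minibatch gradient \<open>\<nabla>F(w) + U/S\<close>, where \<open>U\<close> is a sum of \<open>S\<close> independent centered
  vectors, the quadratic upper bound coming from \<open>\<beta>\<close>-smoothness has a cross term of mean zero and a
  noise term with \<open>E\<parallel>U\<parallel>\<^sup>2 = S \<sigma>\<^sup>2 \<le> S V\<close>. Combined with the PL inequality, one round at learning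
  rate \<open>S\<eta>\<close> contracts the expected optimality gap by \<open>1 - S\<rho>\<close>, with \<open>\<rho> = \<gamma> / \<xi>(S)\<close>, up to an
  additive noise \<open>\<beta>S\<eta>\<^sup>2V/2\<close>. Conditioning on all other rounds (Fubini over the independent
  batches) lets this recursion be unrolled; Bernoulli's inequality \<open>1 - S\<rho> \<le> (1 - \<rho>)\<^sup>S\<close> and the
  geometric series of noise terms, which sums to at most \<open>\<xi>(S) \<Delta>\<close>, give the bound.\<close>

section \<open>Smoothness and the PL inequality\<close>

lemma smooth_descent:
  fixes F :: "'a::real_inner \<Rightarrow> real" and gF :: "'a \<Rightarrow> 'a"
  assumes F_diff: "\<And>w. (F has_derivative (\<lambda>h. gF w \<bullet> h)) (at w)"
    and smooth: "\<And>w w'. norm (gF w - gF w') \<le> \<beta> * norm (w - w')"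
  shows "F v \<le> F w + gF w \<bullet> (v - w) + \<beta> / 2 * (norm (v - w))\<^sup>2"
proof -
  define d where "d = v - w"
  define \<phi> where "\<phi> t = F (w + t *\<^sub>R d) - t * (gF w \<bullet> d) - \<beta> / 2 * t\<^sup>2 * (norm d)\<^sup>2" for t :: real
  have \<phi>_deriv: "(\<phi> has_real_derivative gF (w + t *\<^sub>R d) \<bullet> d - gF w \<bullet> d - \<beta> * t * (norm d)\<^sup>2) (at t)" for t
  proof -
    have "((\<lambda>t. F (w + t *\<^sub>R d)) has_derivative (\<lambda>h. gF (w + t *\<^sub>R d) \<bullet> (h *\<^sub>R d))) (at t)"
      by (rule has_derivative_compose[OF _ F_diff]) (auto intro!: derivative_eq_intros)
    then have F_line: "((\<lambda>t. F (w + t *\<^sub>R d)) has_real_derivative gF (w + t *\<^sub>R d) \<bullet> d) (at t)"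
      by (simp add: has_field_derivative_def mult.commute[of _ "gF (w + t *\<^sub>R d) \<bullet> d"])
    show ?thesis
      unfolding \<phi>_def by (rule derivative_eq_intros F_line | simp)+
  qed
  have "\<phi> 1 \<le> \<phi> 0"
  proof (rule DERIV_nonpos_imp_nonincreasing[of 0 1])
    fix t :: real assume "0 \<le> t" "t \<le> 1"
    have "(gF (w + t *\<^sub>R d) - gF w) \<bullet> d \<le> norm (gF (w + t *\<^sub>R d) - gF w) * norm d"
      by (rule norm_cauchy_schwarz)
    also have "\<dots> \<le> \<beta> * norm (t *\<^sub>R d) * norm d"
      using smooth[of "w + t *\<^sub>R d" w] by (simp add: mult_right_mono)
    also have "\<dots> = \<beta> * t * (norm d)\<^sup>2"
      using \<open>0 \<le> t\<close> by (simp add: power2_eq_square)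
    finally show "\<exists>y. DERIV \<phi> t :> y \<and> y \<le> 0"
      using \<phi>_deriv[of t] by (intro exI[of _ "gF (w + t *\<^sub>R d) \<bullet> d - gF w \<bullet> d - \<beta> * t * (norm d)\<^sup>2"]) (simp add: inner_diff_left)
  qed simp
  then show ?thesis
    unfolding \<phi>_def d_def by simp
qed

lemma PL_constant_le_smoothness_constant:
  fixes F :: "'a::real_inner \<Rightarrow> real" and gF :: "'a \<Rightarrow> 'a"
  assumes F_diff: "\<And>w. (F has_derivative (\<lambda>h. gF w \<bullet> h)) (at w)"
    and smooth: "\<And>w w'. norm (gF w - gF w') \<le> \<beta> * norm (w - w')"
    and PL: "\<And>w. F w - Fstar \<le> 1 / (2 * \<alpha>) * (norm (gF w))\<^sup>2"
    and Fstar_le: "\<And>w. Fstar \<le> F w"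
    and \<alpha>_pos: "\<alpha> > 0" and \<beta>_pos: "\<beta> > 0"
    and nonstationary: "gF w \<noteq> 0"
  shows "\<alpha> \<le> \<beta>"
proof -
  define g where "g = gF w"
  have "F (w - (1 / \<beta>) *\<^sub>R g) \<le> F w - (1 / \<beta>) * (g \<bullet> g) + \<beta> / 2 * (norm ((1 / \<beta>) *\<^sub>R g))\<^sup>2"
    using smooth_descent[OF F_diff smooth, of "w - (1 / \<beta>) *\<^sub>R g" w] by (simp add: g_def)
  also have "\<dots> = F w - (norm g)\<^sup>2 / (2 * \<beta>)"
    using \<beta>_pos by (simp add: power2_norm_eq_inner[symmetric] power_mult_distrib power2_eq_square field_simps)
  finally have "(norm g)\<^sup>2 / (2 * \<beta>) \<le> F w - Fstar"
    using Fstar_le[of "w - (1 / \<beta>) *\<^sub>R g"] by linarith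
  also have "\<dots> \<le> (norm g)\<^sup>2 / (2 * \<alpha>)"
    using PL[of w] by (simp add: g_def)
  finally have "1 / \<beta> \<le> 1 / \<alpha>"
    using nonstationary \<alpha>_pos \<beta>_pos by (simp add: g_def field_simps)
  then show ?thesis
    using \<alpha>_pos \<beta>_pos by (simp add: field_simps)
qed

section \<open>Sums of independent centered vectors\<close>

lemma product_prob_space_const:
  assumes "prob_space X"
  shows "product_prob_space (\<lambda>_. X)"
  unfolding product_prob_space_def product_prob_space_axioms_def product_sigma_finite_def
  using assms prob_space_imp_sigma_finite by blast

lemma
  fixes k :: "'b \<Rightarrow> 'c::{banach,second_countable_topology}"
  assumes X: "prob_space X" and k: "integrable X k" and j: "j \<in> J"
  shows integrable_PiM_component: "integrable (PiM J (\<lambda>_. X)) (\<lambda>y. k (y j))"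
    and integral_PiM_component: "(\<integral>y. k (y j) \<partial>PiM J (\<lambda>_. X)) = (\<integral>x. k x \<partial>X)"
proof -
  have component: "(\<lambda>y. y j) \<in> PiM J (\<lambda>_. X) \<rightarrow>\<^sub>M X"
    using j by (rule measurable_component_singleton)
  have law: "distr (PiM J (\<lambda>_. X)) X (\<lambda>y. y j) = X"
    using X j by (intro distr_PiM_component) auto
  have k_meas: "k \<in> borel_measurable X"
    using k by simp
  show "integrable (PiM J (\<lambda>_. X)) (\<lambda>y. k (y j))"
    using integrable_distr_eq[OF component k_meas] law k by simp
  show "(\<integral>y. k (y j) \<partial>PiM J (\<lambda>_. X)) = (\<integral>x. k x \<partial>X)"
    using integral_distr[OF component k_meas] law by simp
qed

lemma
  fixes a b :: "'b \<Rightarrow> real"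
  assumes X: "prob_space X" and J: "finite J" and jk: "j \<in> J" "k \<in> J" "j \<noteq> k"
    and a: "integrable X a" and b: "integrable X b"
  shows integrable_PiM_two_components: "integrable (PiM J (\<lambda>_. X)) (\<lambda>y. a (y j) * b (y k))"
    and integral_PiM_two_components:
      "(\<integral>y. a (y j) * b (y k) \<partial>PiM J (\<lambda>_. X)) = (\<integral>x. a x \<partial>X) * (\<integral>x. b x \<partial>X)"
proof -
  interpret product_prob_space "\<lambda>_. X" J
    using product_prob_space_const[OF X] .
  define h where "h i = (if i = j then a else if i = k then b else (\<lambda>_. 1))" for i
  have h_int: "integrable X (h i)" for i
    using a b by (simp add: h_def)
  have "(\<Prod>i\<in>J. h i (y i)) = (\<Prod>i\<in>{j, k}. h i (y i))" for y
    using J jk by (intro prod.mono_neutral_right) (auto simp: h_def)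
  then have prod_h: "(\<Prod>i\<in>J. h i (y i)) = a (y j) * b (y k)" for y
    using jk by (simp add: h_def)
  have "(\<Prod>i\<in>J. integral\<^sup>L X (h i)) = (\<Prod>i\<in>{j, k}. integral\<^sup>L X (h i))"
    using J jk by (intro prod.mono_neutral_right) (auto simp: h_def prob_space.prob_space[OF X])
  then have prod_int: "(\<Prod>i\<in>J. integral\<^sup>L X (h i)) = (\<integral>x. a x \<partial>X) * (\<integral>x. b x \<partial>X)"
    using jk by (simp add: h_def)
  have "integrable (PiM J (\<lambda>_. X)) (\<lambda>y. \<Prod>i\<in>J. h i (y i))"
    using J h_int by (intro product_integrable_prod) auto
  then show "integrable (PiM J (\<lambda>_. X)) (\<lambda>y. a (y j) * b (y k))"
    by (simp add: prod_h)
  have "(\<integral>y. (\<Prod>i\<in>J. h i (y i)) \<partial>PiM J (\<lambda>_. X)) = (\<Prod>i\<in>J. integral\<^sup>L X (h i))"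
    using J h_int by (intro product_integral_prod) auto
  then show "(\<integral>y. a (y j) * b (y k) \<partial>PiM J (\<lambda>_. X)) = (\<integral>x. a x \<partial>X) * (\<integral>x. b x \<partial>X)"
    by (simp add: prod_h prod_int)
qed

lemma
  fixes h :: "'b \<Rightarrow> real"
  assumes X: "prob_space X" and J: "finite J"
    and h: "integrable X h" and h_mean: "(\<integral>x. h x \<partial>X) = 0"
    and h_sq: "integrable X (\<lambda>x. (h x)\<^sup>2)"
  shows integrable_PiM_square_sum_centered:
      "integrable (PiM J (\<lambda>_. X)) (\<lambda>y. (\<Sum>j\<in>J. h (y j))\<^sup>2)"
    and integral_PiM_square_sum_centered:
      "(\<integral>y. (\<Sum>j\<in>J. h (y j))\<^sup>2 \<partial>PiM J (\<lambda>_. X)) = real (card J) * (\<integral>x. (h x)\<^sup>2 \<partial>X)"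
proof -
  let ?M = "PiM J (\<lambda>_. X)"
  have expand: "(\<Sum>j\<in>J. h (y j))\<^sup>2 = (\<Sum>j\<in>J. \<Sum>k\<in>J. h (y j) * h (y k))" for y
    by (simp add: power2_eq_square sum_product)
  have products: "integrable ?M (\<lambda>y. h (y j) * h (y k)) \<and>
      (\<integral>y. h (y j) * h (y k) \<partial>?M) = (if j = k then (\<integral>x. (h x)\<^sup>2 \<partial>X) else 0)"
    if "j \<in> J" "k \<in> J" for j k
  proof (cases "j = k")
    case True
    then show ?thesis
      using integrable_PiM_component[OF X h_sq \<open>j \<in> J\<close>] integral_PiM_component[OF X h_sq \<open>j \<in> J\<close>]
      by (simp add: power2_eq_square)
  next
    case False
    then show ?thesis
      using integrable_PiM_two_components[OF X J that False h h]
        integral_PiM_two_components[OF X J that False h h] h_mean by simp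
  qed
  show "integrable ?M (\<lambda>y. (\<Sum>j\<in>J. h (y j))\<^sup>2)"
    unfolding expand using products by (auto intro!: integrable_sum)
  have "(\<integral>y. (\<Sum>j\<in>J. h (y j))\<^sup>2 \<partial>?M) = (\<Sum>j\<in>J. \<Sum>k\<in>J. \<integral>y. h (y j) * h (y k) \<partial>?M)"
    unfolding expand using products by (simp add: integral_sum integrable_sum)
  also have "\<dots> = (\<Sum>j\<in>J. \<Sum>k\<in>J. if j = k then (\<integral>x. (h x)\<^sup>2 \<partial>X) else 0)"
    using products by (intro sum.cong refl) blast
  finally show "(\<integral>y. (\<Sum>j\<in>J. h (y j))\<^sup>2 \<partial>?M) = real (card J) * (\<integral>x. (h x)\<^sup>2 \<partial>X)"
    using J by simp
qed

lemma norm_sq_eq_sum_Basis: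
  fixes x :: "'a::euclidean_space"
  shows "(norm x)\<^sup>2 = (\<Sum>b\<in>Basis. (x \<bullet> b)\<^sup>2)"
  unfolding power2_norm_eq_inner by (simp add: euclidean_inner[of x x] power2_eq_square)

lemma
  fixes u :: "'b \<Rightarrow> 'a::euclidean_space"
  assumes X: "prob_space X" and J: "finite J"
    and u: "integrable X u" and u_mean: "(\<integral>x. u x \<partial>X) = 0"
    and u_sq: "integrable X (\<lambda>x. (norm (u x))\<^sup>2)"
  shows integrable_PiM_norm_sum_centered:
      "integrable (PiM J (\<lambda>_. X)) (\<lambda>y. (norm (\<Sum>j\<in>J. u (y j)))\<^sup>2)"
    and integral_PiM_norm_sum_centered:
      "(\<integral>y. (norm (\<Sum>j\<in>J. u (y j)))\<^sup>2 \<partial>PiM J (\<lambda>_. X)) = real (card J) * (\<integral>x. (norm (u x))\<^sup>2 \<partial>X)"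
proof -
  have ub: "integrable X (\<lambda>x. u x \<bullet> b)" "(\<integral>x. u x \<bullet> b \<partial>X) = 0" for b
    using u u_mean by simp_all
  have ub_sq: "integrable X (\<lambda>x. (u x \<bullet> b)\<^sup>2)" if "b \<in> Basis" for b
  proof (rule Bochner_Integration.integrable_bound[OF u_sq])
    show "(\<lambda>x. (u x \<bullet> b)\<^sup>2) \<in> borel_measurable X"
      using ub(1)[of b] by measurable
    have "(u x \<bullet> b)\<^sup>2 \<le> (norm (u x))\<^sup>2" for x
      using Basis_le_norm[OF that, of "u x"] abs_le_square_iff[of "u x \<bullet> b" "norm (u x)"] by simp
    then show "AE x in X. norm ((u x \<bullet> b)\<^sup>2) \<le> norm ((norm (u x))\<^sup>2)"
      by simp
  qed
  have expand: "(norm (\<Sum>j\<in>J. u (y j)))\<^sup>2 = (\<Sum>b\<in>Basis. (\<Sum>j\<in>J. u (y j) \<bullet> b)\<^sup>2)" for y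
    by (simp add: norm_sq_eq_sum_Basis inner_sum_left)
  note coord = integrable_PiM_square_sum_centered[OF X J ub ub_sq]
    integral_PiM_square_sum_centered[OF X J ub ub_sq]
  show "integrable (PiM J (\<lambda>_. X)) (\<lambda>y. (norm (\<Sum>j\<in>J. u (y j)))\<^sup>2)"
    unfolding expand using coord by (auto intro!: integrable_sum)
  have "(\<integral>y. (norm (\<Sum>j\<in>J. u (y j)))\<^sup>2 \<partial>PiM J (\<lambda>_. X)) = (\<Sum>b\<in>Basis. real (card J) * (\<integral>x. (u x \<bullet> b)\<^sup>2 \<partial>X))"
    unfolding expand using coord by (simp add: integral_sum)
  also have "\<dots> = real (card J) * (\<integral>x. (norm (u x))\<^sup>2 \<partial>X)"
    using ub_sq by (simp add: norm_sq_eq_sum_Basis integral_sum sum_distrib_left)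
  finally show "(\<integral>y. (norm (\<Sum>j\<in>J. u (y j)))\<^sup>2 \<partial>PiM J (\<lambda>_. X)) = real (card J) * (\<integral>x. (norm (u x))\<^sup>2 \<partial>X)" .
qed

section \<open>One step of minibatch SGD\<close>

lemma
  assumes var: "sigma_g2 X gf w \<le> ennreal V" and V: "0 \<le> V"
    and gf: "integrable X (gf w)"
  shows integrable_sigma_g2: "integrable X (\<lambda>x. (norm (gf w x - (\<integral>y. gf w y \<partial>X)))\<^sup>2)"
    and integral_sigma_g2_le: "(\<integral>x. (norm (gf w x - (\<integral>y. gf w y \<partial>X)))\<^sup>2 \<partial>X) \<le> V"
proof -
  let ?v = "\<lambda>x. (norm (gf w x - (\<integral>y. gf w y \<partial>X)))\<^sup>2"
  have nn: "(\<integral>\<^sup>+x. ennreal (?v x) \<partial>X) \<le> ennreal V"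
    using var unfolding sigma_g2_def .
  show v_int: "integrable X ?v"
    using gf nn by (intro integrableI_nonneg) (auto simp: top_unique intro: le_less_trans)
  have "ennreal (\<integral>x. ?v x \<partial>X) \<le> ennreal V"
    using nn by (subst nn_integral_eq_integral[OF v_int, symmetric]) auto
  then show "(\<integral>x. ?v x \<partial>X) \<le> V"
    using V by (simp add: ennreal_le_iff)
qed

lemma
  fixes gf :: "'a::euclidean_space \<Rightarrow> 'b \<Rightarrow> 'a"
  assumes X: "prob_space X" and J: "finite J" and gf: "integrable X (gf w)"
    and var: "sigma_g2 X gf w \<le> ennreal V" and V: "0 \<le> V"
  defines "U \<equiv> \<lambda>y. \<Sum>j\<in>J. gf w (y j) - (\<integral>x. gf w x \<partial>X)"
  shows integrable_minibatch_noise_inner: "integrable (PiM J (\<lambda>_. X)) (\<lambda>y. v \<bullet> U y)"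
    and integral_minibatch_noise_inner: "(\<integral>y. v \<bullet> U y \<partial>PiM J (\<lambda>_. X)) = 0"
    and integrable_minibatch_noise_norm_sq: "integrable (PiM J (\<lambda>_. X)) (\<lambda>y. (norm (U y))\<^sup>2)"
    and integral_minibatch_noise_norm_sq_le: "(\<integral>y. (norm (U y))\<^sup>2 \<partial>PiM J (\<lambda>_. X)) \<le> real (card J) * V"
proof -
  interpret prob_space X
    by (rule X)
  define u where "u x = gf w x - (\<integral>x. gf w x \<partial>X)" for x
  have u: "integrable X u" "(\<integral>x. u x \<partial>X) = 0"
    using gf unfolding u_def by (simp_all add: prob_space)
  have u_sq: "integrable X (\<lambda>x. (norm (u x))\<^sup>2)" "(\<integral>x. (norm (u x))\<^sup>2 \<partial>X) \<le> V"
    using integrable_sigma_g2[OF var V gf] integral_sigma_g2_le[OF var V gf] by (simp_all add: u_def)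
  have U: "U y = (\<Sum>j\<in>J. u (y j))" for y
    by (simp add: U_def u_def)
  have vu: "integrable X (\<lambda>x. v \<bullet> u x)" "(\<integral>x. v \<bullet> u x \<partial>X) = 0"
    using u by simp_all
  have vu_j: "integrable (PiM J (\<lambda>_. X)) (\<lambda>y. v \<bullet> u (y j))" "(\<integral>y. v \<bullet> u (y j) \<partial>PiM J (\<lambda>_. X)) = 0"
    if "j \<in> J" for j
    using integrable_PiM_component[OF X vu(1) that] integral_PiM_component[OF X vu(1) that] vu(2)
    by simp_all
  show "integrable (PiM J (\<lambda>_. X)) (\<lambda>y. v \<bullet> U y)" "(\<integral>y. v \<bullet> U y \<partial>PiM J (\<lambda>_. X)) = 0"
    using vu_j by (simp_all add: U inner_sum_right integrable_sum integral_sum)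
  show "integrable (PiM J (\<lambda>_. X)) (\<lambda>y. (norm (U y))\<^sup>2)"
    unfolding U using integrable_PiM_norm_sum_centered[OF X J u u_sq(1)] .
  have "(\<integral>y. (norm (U y))\<^sup>2 \<partial>PiM J (\<lambda>_. X)) = real (card J) * (\<integral>x. (norm (u x))\<^sup>2 \<partial>X)"
    unfolding U using integral_PiM_norm_sum_centered[OF X J u u_sq(1)] .
  then show "(\<integral>y. (norm (U y))\<^sup>2 \<partial>PiM J (\<lambda>_. X)) \<le> real (card J) * V"
    using u_sq(2) by (simp add: mult_left_mono)
qed

lemma scaleR_average_add_const:
  fixes g :: "'a::real_vector"
  assumes "finite J" and "J \<noteq> {}"
  shows "(1 / real (card J)) *\<^sub>R (\<Sum>j\<in>J. g + u j) = g + (1 / real (card J)) *\<^sub>R (\<Sum>j\<in>J. u j)"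
  using assms by (simp add: sum.distrib scaleR_add_right sum_constant_scaleR)

lemma minibatch_step_descent:
  fixes F :: "'a::real_inner \<Rightarrow> real" and gF :: "'a \<Rightarrow> 'a" and n :: real
  assumes F_diff: "\<And>w. (F has_derivative (\<lambda>h. gF w \<bullet> h)) (at w)"
    and smooth: "\<And>w w'. norm (gF w - gF w') \<le> \<beta> * norm (w - w')"
    and n: "n \<noteq> 0"
  shows "F (w - lr *\<^sub>R (gF w + (1 / n) *\<^sub>R U))
    \<le> F w - lr * (1 - lr * \<beta> / 2) * (norm (gF w))\<^sup>2 + (\<beta> * lr\<^sup>2 - lr) / n * (gF w \<bullet> U)
      + \<beta> * lr\<^sup>2 / (2 * n\<^sup>2) * (norm U)\<^sup>2"
proof -
  define g where "g = gF w"
  define d where "d = lr *\<^sub>R (g + (1 / n) *\<^sub>R U)"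
  have g_d: "g \<bullet> d = lr * (norm g)\<^sup>2 + lr / n * (g \<bullet> U)"
    by (simp add: d_def inner_add_right power2_norm_eq_inner algebra_simps)
  have norm_d: "(norm d)\<^sup>2 = lr\<^sup>2 * ((norm g)\<^sup>2 + 2 / n * (g \<bullet> U) + (norm U)\<^sup>2 / n\<^sup>2)"
    unfolding d_def power2_norm_eq_inner
    by (simp add: inner_add_left inner_add_right inner_commute[of U g] power2_eq_square algebra_simps)
  have "F (w - d) \<le> F w - g \<bullet> d + \<beta> / 2 * (norm d)\<^sup>2"
    using smooth_descent[OF F_diff smooth, of "w - d" w] by (simp add: g_def)
  also have "\<dots> = F w - lr * (1 - lr * \<beta> / 2) * (norm g)\<^sup>2 + (\<beta> * lr\<^sup>2 - lr) / n * (g \<bullet> U)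
      + \<beta> * lr\<^sup>2 / (2 * n\<^sup>2) * (norm U)\<^sup>2"
    unfolding g_d norm_d using n by (simp add: field_simps power2_eq_square)
  finally show ?thesis
    unfolding d_def g_def .
qed

lemma PL_gap_contraction:
  fixes e G \<alpha> \<beta> lr :: real
  assumes PL: "e \<le> 1 / (2 * \<alpha>) * G" and \<alpha>: "0 < \<alpha>" and lr: "0 \<le> lr" "lr * \<beta> \<le> 2"
  shows "e - lr * (1 - lr * \<beta> / 2) * G \<le> (1 - lr * \<alpha> * (2 - lr * \<beta>)) * e"
proof -
  have "2 * \<alpha> * e \<le> G"
    using PL \<alpha> by (simp add: field_simps)
  then have "lr * (1 - lr * \<beta> / 2) * (2 * \<alpha> * e) \<le> lr * (1 - lr * \<beta> / 2) * G"
    using lr by (intro mult_left_mono) auto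
  then show ?thesis
    by (simp add: algebra_simps)
qed

lemma expected_minibatch_sgd_step:
  fixes gf :: "'a::euclidean_space \<Rightarrow> 'b \<Rightarrow> 'a" and F :: "'a \<Rightarrow> real" and gF :: "'a \<Rightarrow> 'a"
  assumes X: "prob_space X"
    and gf_int: "integrable X (gf w)"
    and unbiased: "(\<integral> x. gf w x \<partial>X) = gF w"
    and var: "sigma_g2 X gf w \<le> ennreal V" and V: "0 \<le> V"
    and F_diff: "\<And>w. (F has_derivative (\<lambda>h. gF w \<bullet> h)) (at w)"
    and smooth: "\<And>w w'. norm (gF w - gF w') \<le> \<beta> * norm (w - w')" and \<beta>: "0 \<le> \<beta>"
    and PL: "F w - Fstar \<le> 1 / (2 * \<alpha>) * (norm (gF w))\<^sup>2" and \<alpha>: "0 < \<alpha>"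
    and Fstar_le: "\<And>v. Fstar \<le> F v"
    and J: "finite J" "J \<noteq> {}"
    and lr: "0 \<le> lr" "lr * \<beta> \<le> 2"
  shows "(\<integral>\<^sup>+y. ennreal (F (w - lr *\<^sub>R ((1 / real (card J)) *\<^sub>R (\<Sum>j\<in>J. gf w (y j)))) - Fstar)
            \<partial>PiM J (\<lambda>_. X))
         \<le> ennreal ((1 - lr * \<alpha> * (2 - lr * \<beta>)) * (F w - Fstar)
                    + \<beta> * lr\<^sup>2 * V / (2 * real (card J)))"
proof -
  let ?M = "PiM J (\<lambda>_. X)"
  interpret prob_space ?M
    using X by (intro prob_space_PiM)
  define n where "n = real (card J)"
  define g where "g = gF w"
  define U where "U y = (\<Sum>j\<in>J. gf w (y j) - g)" for y
  define A where "A = F w - Fstar - lr * (1 - lr * \<beta> / 2) * (norm g)\<^sup>2"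
  define B where "B = (\<beta> * lr\<^sup>2 - lr) / n"
  define D where "D = \<beta> * lr\<^sup>2 / (2 * n\<^sup>2)"
  have n: "0 < n"
    using J by (simp add: n_def card_gt_0_iff)
  note noise = integrable_minibatch_noise_inner[OF X J(1) gf_int var V]
    integral_minibatch_noise_inner[OF X J(1) gf_int var V]
    integrable_minibatch_noise_norm_sq[OF X J(1) gf_int var V]
    integral_minibatch_noise_norm_sq_le[OF X J(1) gf_int var V]
  have pointwise: "F (w - lr *\<^sub>R ((1 / n) *\<^sub>R (\<Sum>j\<in>J. gf w (y j)))) - Fstar
      \<le> A + B * (g \<bullet> U y) + D * (norm (U y))\<^sup>2" for y
  proof -
    have "(1 / n) *\<^sub>R (\<Sum>j\<in>J. gf w (y j)) = g + (1 / n) *\<^sub>R U y"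
      using scaleR_average_add_const[OF J, of g "\<lambda>j. gf w (y j) - g"] by (simp add: U_def n_def)
    then show ?thesis
      using minibatch_step_descent[OF F_diff smooth, of n w lr "U y"] n
      by (simp add: A_def B_def D_def g_def)
  qed
  have "(\<integral>\<^sup>+y. ennreal (F (w - lr *\<^sub>R ((1 / n) *\<^sub>R (\<Sum>j\<in>J. gf w (y j)))) - Fstar) \<partial>?M)
      \<le> (\<integral>\<^sup>+y. ennreal (A + B * (g \<bullet> U y) + D * (norm (U y))\<^sup>2) \<partial>?M)"
    by (intro nn_integral_mono ennreal_leI pointwise)
  also have "\<dots> = ennreal (A + D * (\<integral>y. (norm (U y))\<^sup>2 \<partial>?M))"
    using noise order.trans[OF _ pointwise] Fstar_le
    by (subst nn_integral_eq_integral) (auto simp: U_def g_def unbiased prob_space)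
  also have "\<dots> \<le> ennreal ((1 - lr * \<alpha> * (2 - lr * \<beta>)) * (F w - Fstar) + \<beta> * lr\<^sup>2 * V / (2 * n))"
  proof (rule ennreal_leI)
    have "A \<le> (1 - lr * \<alpha> * (2 - lr * \<beta>)) * (F w - Fstar)"
      unfolding A_def using PL_gap_contraction[OF PL[folded g_def] \<alpha> lr] .
    moreover have "D * (\<integral>y. (norm (U y))\<^sup>2 \<partial>?M) \<le> D * (n * V)"
      using noise(4) \<beta> by (intro mult_left_mono) (simp_all add: U_def g_def unbiased n_def D_def)
    moreover have "D * (n * V) = \<beta> * lr\<^sup>2 * V / (2 * n)"
      using n by (simp add: D_def power2_eq_square)
    ultimately show "A + D * (\<integral>y. (norm (U y))\<^sup>2 \<partial>?M)
        \<le> (1 - lr * \<alpha> * (2 - lr * \<beta>)) * (F w - Fstar) + \<beta> * lr\<^sup>2 * V / (2 * n)"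
      by linarith
  qed
  finally show ?thesis
    unfolding n_def .
qed

section \<open>Scaled SGD iterates\<close>

lemma scaled_sgd_cong:
  assumes "\<And>s i. s < t \<Longrightarrow> i < S \<Longrightarrow> \<omega> (s, i) = \<omega>' (s, i)"
  shows "scaled_sgd gf S lr w0 \<omega> t = scaled_sgd gf S lr w0 \<omega>' t"
  using assms by (induction t) (auto simp: Let_def)

lemma measurable_scaled_sgd:
  fixes gf :: "'a::euclidean_space \<Rightarrow> 'b \<Rightarrow> 'a"
  assumes gf_meas: "(\<lambda>(w, x). gf w x) \<in> borel_measurable (borel \<Otimes>\<^sub>M X)"
    and K: "{..<t} \<times> {..<S} \<subseteq> K"
  shows "(\<lambda>\<omega>. scaled_sgd gf S lr w0 \<omega> t) \<in> borel_measurable (PiM K (\<lambda>_. X))"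
  using K
proof (induction t)
  case 0
  then show ?case by simp
next
  case (Suc t)
  have IH[measurable]: "(\<lambda>\<omega>. scaled_sgd gf S lr w0 \<omega> t) \<in> borel_measurable (PiM K (\<lambda>_. X))"
    using Suc by (intro Suc.IH) auto
  have [measurable]: "(\<lambda>\<omega>. gf (scaled_sgd gf S lr w0 \<omega> t) (\<omega> (t, i))) \<in> borel_measurable (PiM K (\<lambda>_. X))"
    if "i < S" for i
  proof -
    have "(\<lambda>\<omega>. \<omega> (t, i)) \<in> PiM K (\<lambda>_. X) \<rightarrow>\<^sub>M X"
      using Suc.prems that by (intro measurable_component_singleton) auto
    with IH have "(\<lambda>\<omega>. (scaled_sgd gf S lr w0 \<omega> t, \<omega> (t, i))) \<in> PiM K (\<lambda>_. X) \<rightarrow>\<^sub>M borel \<Otimes>\<^sub>M X"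
      by (rule measurable_Pair)
    from measurable_compose[OF this gf_meas] show ?thesis
      by simp
  qed
  show ?case
    by (simp add: Let_def)
qed

definition round_indices :: "nat \<Rightarrow> nat \<Rightarrow> (nat \<times> nat) set" where
  "round_indices S t = {t} \<times> {..<S}"

definition other_rounds_indices :: "nat \<Rightarrow> nat \<Rightarrow> nat \<Rightarrow> (nat \<times> nat) set" where
  "other_rounds_indices T S t = {..<T} \<times> {..<S} - round_indices S t"

lemma card_round_indices: "card (round_indices S t) = S"
  unfolding round_indices_def by (simp add: card_cartesian_product)

lemma nn_integral_batches_split_round:
  assumes X: "prob_space X" and t: "t < T"
    and f: "f \<in> borel_measurable (batches T S X)"
  shows "(\<integral>\<^sup>+\<omega>. f \<omega> \<partial>batches T S X)
    = (\<integral>\<^sup>+x. (\<integral>\<^sup>+y. f (merge (other_rounds_indices T S t) (round_indices S t) (x, y))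
        \<partial>PiM (round_indices S t) (\<lambda>_. X)) \<partial>PiM (other_rounds_indices T S t) (\<lambda>_. X))"
proof -
  interpret product_prob_space "\<lambda>_. X" UNIV
    using product_prob_space_const[OF X] .
  have split: "other_rounds_indices T S t \<union> round_indices S t = {..<T} \<times> {..<S}"
    using t by (auto simp: other_rounds_indices_def round_indices_def)
  show ?thesis
    using f unfolding batches_def split[symmetric]
    by (intro product_nn_integral_fold) (auto simp: other_rounds_indices_def round_indices_def)
qed

lemma scaled_sgd_merge_before_round:
  assumes "t < T" and "s \<le> t"
  shows "scaled_sgd gf S lr w0 (merge (other_rounds_indices T S t) (round_indices S t) (x, y)) s
    = scaled_sgd gf S lr w0 x s"
  using assms
  by (intro scaled_sgd_cong) (auto simp: merge_def other_rounds_indices_def round_indices_def)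

lemma scaled_sgd_merge_round:
  assumes "t < T"
  shows "scaled_sgd gf S lr w0 (merge (other_rounds_indices T S t) (round_indices S t) (x, y)) (Suc t)
    = (let w = scaled_sgd gf S lr w0 x t
       in w - lr t *\<^sub>R ((1 / real (card (round_indices S t))) *\<^sub>R (\<Sum>j\<in>round_indices S t. gf w (y j))))"
proof -
  have "(\<Sum>i<S. gf w (merge (other_rounds_indices T S t) (round_indices S t) (x, y) (t, i)))
      = (\<Sum>i<S. gf w (y (t, i)))" for w
    by (intro sum.cong) (auto simp: merge_def other_rounds_indices_def round_indices_def)
  also have "(\<Sum>i<S. gf w (y (t, i))) = (\<Sum>j\<in>round_indices S t. gf w (y j))" for w
  proof -
    have "round_indices S t = Pair t ` {..<S}"
      by (auto simp: round_indices_def)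
    then show ?thesis
      by (simp add: sum.reindex inj_on_def)
  qed
  finally have sum_eq: "(\<Sum>i<S. gf w (merge (other_rounds_indices T S t) (round_indices S t) (x, y) (t, i)))
      = (\<Sum>j\<in>round_indices S t. gf w (y j))" for w .
  have past: "scaled_sgd gf S lr w0 (merge (other_rounds_indices T S t) (round_indices S t) (x, y)) t
      = scaled_sgd gf S lr w0 x t"
    using assms by (intro scaled_sgd_merge_before_round) simp_all
  show ?thesis
    by (simp add: Let_def card_round_indices sum_eq past)
qed

section \<open>Convergence under the PL condition\<close>

lemma unrolled_contraction_le:
  fixes \<rho> a C :: real
  assumes S: "0 < S" and \<rho>: "0 < \<rho>" "real S * \<rho> \<le> 1" and a: "0 \<le> a" and C: "0 \<le> C"
  shows "(1 - real S * \<rho>) ^ T * a + C * (\<Sum>k<T. (1 - real S * \<rho>) ^ k)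
    \<le> (1 - \<rho>) ^ (S * T) * a + C / (real S * \<rho>)"
proof -
  let ?q = "1 - real S * \<rho>"
  have q: "0 \<le> ?q" "?q < 1"
    using S \<rho> by auto
  have "\<rho> \<le> real S * \<rho>"
    using S \<rho> by (simp add: mult_le_cancel_right1)
  then have "- \<rho> \<ge> -1"
    using \<rho> by linarith
  then have "?q \<le> (1 - \<rho>) ^ S"
    using Bernoulli_inequality[of "- \<rho>" S] by simp
  then have "?q ^ T \<le> (1 - \<rho>) ^ (S * T)"
    unfolding power_mult using q by (intro power_mono)
  then have "?q ^ T * a \<le> (1 - \<rho>) ^ (S * T) * a"
    using a by (rule mult_right_mono)
  moreover have "(\<Sum>k<T. ?q ^ k) \<le> 1 / (real S * \<rho>)"
  proof -
    have "(\<Sum>k<T. ?q ^ k) = (1 - ?q ^ T) / (real S * \<rho>)"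
      using sum_gp_strict[of ?q T] S \<rho> by simp
    also have "\<dots> \<le> 1 / (real S * \<rho>)"
      using q S \<rho> by (intro divide_right_mono) auto
    finally show ?thesis .
  qed
  then have "C * (\<Sum>k<T. ?q ^ k) \<le> C / (real S * \<rho>)"
    using mult_left_mono[OF _ C] by (simp add: divide_inverse)
  ultimately show ?thesis
    by linarith
qed

locale pl_smooth_sgd =
  fixes X :: "'b measure" and gf :: "'a::euclidean_space \<Rightarrow> 'b \<Rightarrow> 'a"
    and F :: "'a \<Rightarrow> real" and gF :: "'a \<Rightarrow> 'a"
    and \<alpha> \<beta> V Fstar \<eta> :: real and S T :: nat and w0 :: 'a
  assumes X: "prob_space X"
    and gf_meas: "(\<lambda>(w, x). gf w x) \<in> borel_measurable (borel \<Otimes>\<^sub>M X)"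
    and gf_int: "\<And>w. integrable X (gf w)"
    and unbiased: "\<And>w. (\<integral> x. gf w x \<partial>X) = gF w"
    and bounded_var: "\<And>w. sigma_g2 X gf w \<le> ennreal V"
    and F_diff: "\<And>w. (F has_derivative (\<lambda>h. gF w \<bullet> h)) (at w)"
    and smooth: "\<And>w w'. norm (gF w - gF w') \<le> \<beta> * norm (w - w')"
    and PL: "\<And>w. F w - Fstar \<le> 1 / (2 * \<alpha>) * (norm (gF w))\<^sup>2"
    and Fstar_le: "\<And>w. Fstar \<le> F w"
    and \<alpha>_pos: "\<alpha> > 0" and \<beta>_pos: "\<beta> > 0" and V_nonneg: "V \<ge> 0"
    and S_pos: "S > 0" and \<eta>_pos: "\<eta> > 0" and \<eta>_bound: "\<eta> < 2 / (real S * \<beta>)"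
begin

definition "\<rho> = \<eta> * \<alpha> * (2 - real S * \<eta> * \<beta>)"

definition "step_noise = \<beta> * real S * \<eta>\<^sup>2 * V / 2"

abbreviation "iterate \<omega> t \<equiv> scaled_sgd gf S (\<lambda>_. real S * \<eta>) w0 \<omega> t"

definition "expected_gap t = (\<integral>\<^sup>+\<omega>. ennreal (F (iterate \<omega> t) - Fstar) \<partial>batches T S X)"

lemma step_size_bound: "real S * \<eta> * \<beta> < 2"
  using \<eta>_bound S_pos \<beta>_pos by (simp add: field_simps)

lemma \<rho>_pos: "0 < \<rho>"
  unfolding \<rho>_def using \<eta>_pos \<alpha>_pos step_size_bound by simp

lemma step_noise_nonneg: "0 \<le> step_noise"
  unfolding step_noise_def using \<beta>_pos V_nonneg by simp

lemma step_size_denominators: "0 < 2 - \<eta> * \<beta>" "0 < 2 - real S * \<eta> * \<beta>"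
proof -
  have "\<eta> * \<beta> \<le> real S * \<eta> * \<beta>"
    using S_pos \<eta>_pos \<beta>_pos by simp
  then show "0 < 2 - \<eta> * \<beta>" "0 < 2 - real S * \<eta> * \<beta>"
    using step_size_bound by linarith+
qed

lemma \<rho>_eq_gamma_div_xi:
  "\<rho> = \<eta> * \<alpha> * (2 - \<eta> * \<beta>) / ((2 - \<eta> * \<beta>) / (2 - real S * \<eta> * \<beta>))"
  using step_size_denominators by (simp add: \<rho>_def)

lemma step_noise_eq_xi_Delta:
  "step_noise / (real S * \<rho>)
    = (2 - \<eta> * \<beta>) / (2 - real S * \<eta> * \<beta>) * (1 / (2 * (\<eta> * \<alpha> * (2 - \<eta> * \<beta>))) * \<eta>\<^sup>2 * \<beta> * V)"
proof -
  define a where "a = 2 - \<eta> * \<beta>"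
  define b where "b = 2 - real S * \<eta> * \<beta>"
  have "0 < a" "0 < b"
    using step_size_denominators by (simp_all add: a_def b_def)
  have "step_noise / (real S * \<rho>) = \<beta> * real S * \<eta>\<^sup>2 * V / 2 / (real S * (\<eta> * \<alpha> * b))"
    by (simp add: step_noise_def \<rho>_def b_def)
  also have "\<dots> = a / b * (1 / (2 * (\<eta> * \<alpha> * a)) * \<eta>\<^sup>2 * \<beta> * V)"
    using \<open>0 < a\<close> \<open>0 < b\<close> S_pos \<eta>_pos \<alpha>_pos by (simp add: field_simps power2_eq_square)
  finally show ?thesis
    unfolding a_def b_def .
qed

lemma F_measurable[measurable]: "F \<in> borel_measurable borel"
  using F_diff has_derivative_continuous continuous_at_imp_continuous_on
  by (intro borel_measurable_continuous_onI) blast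

lemma contraction_rate_le_one:
  assumes "gF w \<noteq> 0"
  shows "real S * \<rho> \<le> 1"
proof -
  have "\<alpha> \<le> \<beta>"
    using PL_constant_le_smoothness_constant[OF F_diff smooth PL Fstar_le \<alpha>_pos \<beta>_pos assms] .
  then have "real S * \<eta> * \<alpha> * (2 - real S * \<eta> * \<beta>) \<le> real S * \<eta> * \<beta> * (2 - real S * \<eta> * \<beta>)"
    using step_size_bound \<eta>_pos by (intro mult_right_mono mult_left_mono) auto
  then have "real S * \<rho> \<le> real S * \<eta> * \<beta> * (2 - real S * \<eta> * \<beta>)"
    unfolding \<rho>_def by (simp only: mult.assoc)
  also have "\<dots> \<le> 1"
    using zero_le_power2[of "real S * \<eta> * \<beta> - 1"] by (simp add: power2_eq_square algebra_simps)
  finally show ?thesis .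
qed

lemma expected_gap_fold_round:
  assumes t: "t < T" and s: "s \<le> Suc t"
  shows "expected_gap s
    = (\<integral>\<^sup>+x. (\<integral>\<^sup>+y. ennreal (F (iterate (merge (other_rounds_indices T S t) (round_indices S t) (x, y)) s) - Fstar)
        \<partial>PiM (round_indices S t) (\<lambda>_. X)) \<partial>PiM (other_rounds_indices T S t) (\<lambda>_. X))"
proof -
  have "{..<s} \<times> {..<S} \<subseteq> {..<T} \<times> {..<S}"
    using t s by auto
  then have "(\<lambda>\<omega>. ennreal (F (iterate \<omega> s) - Fstar)) \<in> borel_measurable (batches T S X)"
    unfolding batches_def using measurable_scaled_sgd[OF gf_meas] by measurable
  then show ?thesis
    unfolding expected_gap_def by (rule nn_integral_batches_split_round[OF X t])
qed

lemma expected_gap_round_le: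
  assumes t: "t < T"
  shows "(\<integral>\<^sup>+y. ennreal (F (iterate (merge (other_rounds_indices T S t) (round_indices S t) (x, y)) (Suc t)) - Fstar)
      \<partial>PiM (round_indices S t) (\<lambda>_. X))
    \<le> ennreal ((1 - real S * \<rho>) * (F (iterate x t) - Fstar) + step_noise)"
proof -
  have rate: "1 - real S * \<eta> * \<alpha> * (2 - real S * \<eta> * \<beta>) = 1 - real S * \<rho>"
    by (simp add: \<rho>_def algebra_simps)
  have noise: "\<beta> * (real S * \<eta>)\<^sup>2 * V / (2 * real (card (round_indices S t))) = step_noise"
    using S_pos by (simp add: step_noise_def card_round_indices power2_eq_square)
  have "round_indices S t \<noteq> {}"
    using card_round_indices[of S t] S_pos by auto
  then show ?thesis
    unfolding scaled_sgd_merge_round[OF t] Let_def rate[symmetric] noise[symmetric]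
    using \<beta>_pos \<eta>_pos step_size_bound
    by (intro expected_minibatch_sgd_step[OF X gf_int unbiased bounded_var V_nonneg F_diff smooth _ PL
          \<alpha>_pos Fstar_le]) (auto simp: round_indices_def)
qed

lemma expected_gap_Suc_le:
  assumes t: "t < T" and contraction: "real S * \<rho> \<le> 1"
  shows "expected_gap (Suc t) \<le> ennreal (1 - real S * \<rho>) * expected_gap t + ennreal step_noise"
proof -
  let ?I = "other_rounds_indices T S t" and ?J = "round_indices S t"
  interpret I: prob_space "PiM ?I (\<lambda>_. X)"
    using X by (intro prob_space_PiM)
  interpret J: prob_space "PiM ?J (\<lambda>_. X)"
    using X by (intro prob_space_PiM)
  have gap_t: "expected_gap t = (\<integral>\<^sup>+x. ennreal (F (iterate x t) - Fstar) \<partial>PiM ?I (\<lambda>_. X))"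
    using expected_gap_fold_round[OF t, of t]
      scaled_sgd_merge_before_round[OF t order.refl, of gf S "\<lambda>_. real S * \<eta>" w0]
    by (simp add: J.emeasure_space_1)
  have "{..<t} \<times> {..<S} \<subseteq> ?I"
    using t by (auto simp: other_rounds_indices_def round_indices_def)
  then have gap_measurable: "(\<lambda>x. ennreal (F (iterate x t) - Fstar)) \<in> borel_measurable (PiM ?I (\<lambda>_. X))"
    using measurable_scaled_sgd[OF gf_meas] by measurable
  have "expected_gap (Suc t)
      \<le> (\<integral>\<^sup>+x. ennreal (1 - real S * \<rho>) * ennreal (F (iterate x t) - Fstar) + ennreal step_noise \<partial>PiM ?I (\<lambda>_. X))"
    unfolding expected_gap_fold_round[OF t order.refl]
    using expected_gap_round_le[OF t] contraction step_noise_nonneg Fstar_le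
    by (intro nn_integral_mono) (simp add: ennreal_mult ennreal_plus[symmetric])
  also have "\<dots> = ennreal (1 - real S * \<rho>) * expected_gap t + ennreal step_noise"
    unfolding gap_t using gap_measurable
    by (simp add: nn_integral_add nn_integral_cmult I.emeasure_space_1)
  finally show ?thesis .
qed

lemma expected_gap_0: "expected_gap 0 = ennreal (F w0 - Fstar)"
proof -
  interpret prob_space "batches T S X"
    unfolding batches_def using X by (intro prob_space_PiM)
  show ?thesis
    by (simp add: expected_gap_def emeasure_space_1)
qed

lemma expected_gap_le_unrolled:
  assumes contraction: "real S * \<rho> \<le> 1" and "t \<le> T"
  shows "expected_gap t
    \<le> ennreal ((1 - real S * \<rho>) ^ t * (F w0 - Fstar) + step_noise * (\<Sum>k<t. (1 - real S * \<rho>) ^ k))"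
  using \<open>t \<le> T\<close>
proof (induction t)
  case 0
  then show ?case
    by (simp add: expected_gap_0)
next
  case (Suc t)
  let ?q = "1 - real S * \<rho>"
  let ?b = "?q ^ t * (F w0 - Fstar) + step_noise * (\<Sum>k<t. ?q ^ k)"
  have q: "0 \<le> ?q"
    using contraction by simp
  have b: "0 \<le> ?b"
    using q step_noise_nonneg Fstar_le[of w0] by (simp add: sum_nonneg)
  have "expected_gap (Suc t) \<le> ennreal ?q * expected_gap t + ennreal step_noise"
    using expected_gap_Suc_le[OF _ contraction] Suc.prems by simp
  also have "\<dots> \<le> ennreal ?q * ennreal ?b + ennreal step_noise"
    using Suc by (intro add_mono mult_left_mono) auto
  also have "\<dots> = ennreal (?q * ?b + step_noise)"
    using q b step_noise_nonneg by (simp add: ennreal_mult ennreal_plus)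
  also have "?q * ?b + step_noise = ?q ^ Suc t * (F w0 - Fstar) + step_noise * (\<Sum>k<Suc t. ?q ^ k)"
    unfolding sum.lessThan_Suc_shift by (simp add: sum_distrib_left algebra_simps del: sum.lessThan_Suc)
  finally show ?case .
qed

text \<open>Bounding \<open>1 - S\<rho>\<close> below by \<open>0\<close> uses \<open>\<alpha> \<le> \<beta>\<close>, which needs a nonstationary point; without
  one, PL forces \<open>F = Fstar\<close> everywhere.\<close>

lemma expected_gap_bound:
  "expected_gap T \<le> ennreal ((1 - \<rho>) ^ (S * T) * (F w0 - Fstar) + step_noise / (real S * \<rho>))"
proof (cases "\<exists>w. gF w \<noteq> 0")
  case True
  then have contraction: "real S * \<rho> \<le> 1"
    using contraction_rate_le_one by blast
  have "expected_gap T
      \<le> ennreal ((1 - real S * \<rho>) ^ T * (F w0 - Fstar) + step_noise * (\<Sum>k<T. (1 - real S * \<rho>) ^ k))"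
    using expected_gap_le_unrolled[OF contraction] by simp
  also have "\<dots> \<le> ennreal ((1 - \<rho>) ^ (S * T) * (F w0 - Fstar) + step_noise / (real S * \<rho>))"
    using unrolled_contraction_le[OF S_pos \<rho>_pos contraction _ step_noise_nonneg] Fstar_le[of w0]
    by (intro ennreal_leI) simp
  finally show ?thesis .
next
  case False
  then have "F w - Fstar \<le> 0" for w
    using PL[of w] by simp
  then show ?thesis
    by (simp add: expected_gap_def ennreal_neg)
qed

end

theorem theorem3:
  fixes X :: "'b measure"
    and f :: "'a::euclidean_space \<Rightarrow> 'b \<Rightarrow> real"
    and gf :: "'a \<Rightarrow> 'b \<Rightarrow> 'a"
    and F :: "'a \<Rightarrow> real"
    and gF :: "'a \<Rightarrow> 'a"
    and \<alpha> \<beta> V Fstar \<eta> :: real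
    and S T :: nat
    and w0 :: 'a
  assumes X: "prob_space X"
    and f_int: "\<And>w. integrable X (f w)"
    and F_def: "\<And>w. F w = (\<integral> x. f w x \<partial>X)"
    and f_diff: "\<And>w x. x \<in> space X \<Longrightarrow> ((\<lambda>v. f v x) has_derivative (\<lambda>h. gf w x \<bullet> h)) (at w)"
    and F_diff: "\<And>w. (F has_derivative (\<lambda>h. gF w \<bullet> h)) (at w)"
    and gf_meas: "(\<lambda>(w, x). gf w x) \<in> borel_measurable (borel \<Otimes>\<^sub>M X)"
    and gf_int: "\<And>w. integrable X (gf w)"
    and unbiased: "\<And>w. (\<integral> x. gf w x \<partial>X) = gF w"
    and Fstar_min: "\<forall>w. Fstar \<le> F w" "\<exists>w. F w = Fstar"
    and \<alpha>_pos: "\<alpha> > 0"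
    and PL: "\<And>w. F w - Fstar \<le> 1 / (2 * \<alpha>) * (norm (gF w))\<^sup>2"
    and \<beta>_pos: "\<beta> > 0"
    and smooth: "\<And>w w'. norm (gF w - gF w') \<le> \<beta> * norm (w - w')"
    and V_nonneg: "V \<ge> 0"
    and bounded_var: "\<And>w. sigma_g2 X gf w \<le> ennreal V"
    and S_pos: "S > 0"
    and \<eta>_pos: "\<eta> > 0"
    and \<eta>_bound: "\<eta> < 2 / (real S * \<beta>)"
  shows "let \<gamma> = \<eta> * \<alpha> * (2 - \<eta> * \<beta>);
             \<Delta> = 1 / (2 * \<gamma>) * \<eta>\<^sup>2 * \<beta> * V;
             \<xi> = (2 - \<eta> * \<beta>) / (2 - real S * \<eta> * \<beta>)
         in (\<integral>\<^sup>+ \<omega>. ennreal (F (scaled_sgd gf S (\<lambda>t. real S * \<eta>) w0 \<omega> T) - Fstar)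
               \<partial>batches T S X)
            \<le> ennreal ((1 - \<gamma> / \<xi>) ^ (S * T) * (F w0 - Fstar) + \<xi> * \<Delta>)"
proof -
  have Fstar_le: "\<And>w. Fstar \<le> F w"
    using Fstar_min(1) by blast
  interpret pl_smooth_sgd X gf F gF \<alpha> \<beta> V Fstar \<eta> S T w0
    by (rule pl_smooth_sgd.intro)
      (fact X gf_meas gf_int unbiased bounded_var F_diff smooth PL Fstar_le \<alpha>_pos \<beta>_pos V_nonneg
        S_pos \<eta>_pos \<eta>_bound)+
  show ?thesis
    using expected_gap_bound unfolding expected_gap_def step_noise_eq_xi_Delta
    unfolding \<rho>_eq_gamma_div_xi Let_def .
qed

end
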